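(* Let $L\subseteq\Sigma^\omega$ be a language recognised by some deterministic coBüchi automaton, and let $\mathcal{A}_{\min}$ be a nice, safe minimal and safe centralised history-deterministic coBüchi automaton recognising $L$, with safe components $\mathcal{S}_1,\dots,\mathcal{S}_k$ (state sets $S_i$, transition sets $\Delta_i$). Let $R_1,\dots,R_m$ be the distinct residuals of $L$, with $R_1=L$, and for each $j$ let $Q^{R_j}$ be the set of states $q$ of $\mathcal{A}_{\min}$ whose language (with $q$ as initial state) is $R_j$. Let $n_j=\max_{1\le i\le k}|S_i\cap Q^{R_j}|$, let $P_j=\{p_j^1,\dots,p_j^{n_j}\}$ be pairwise disjoint sets, and $Q=P_1\cup\dots\cup P_m$. Let $\mathcal{A}_{\mathrm{gen}}$ be the generalised coBüchi automaton with states $Q$, initial state $p_1^1$, colours $\{1,\dots,k\}$, and transitions: for every transition $(q,a,q')$ of $\mathcal{A}_{\min}$ with $q\in Q^{R_j}$ and $q'\in Q^{R_{j'}}$, all triples $(p,a,p')$ with $p\in P_j$, $p'\in P_{j'}$. For each $i$, let $\phi_i:S_i\to Q$ be an injective map with $\phi_i(q)\in P_j$ whenever $q\in Q^{R_j}$, extended to transitions by $\phi_i(q,a,q')=(\phi_i(q),a,\phi_i(q'))$, and label each transition $e$ of $\mathcal{A}_{\mathrm{gen}}$ by $\mathrm{col}(e)=\{i : \text{there is no } e'\in\Delta_i \text{ with } \phi_i(e')=e\}$. Then $\mathcal{A}_{\mathrm{gen}}$ is history-deterministic and $\mathcal{L}(\mathcal{A}_{\mathrm{gen}})=L$.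
   Context: An automaton is a tuple $(Q,\Sigma,q_{\mathrm{init}},\Delta,\Gamma,\mathrm{col},W)$ with finite state set, finite input alphabet $\Sigma$, initial state, transitions $\Delta\subseteq Q\times\Sigma\times Q$, output alphabet $\Gamma$, labelling $\mathrm{col}:\Delta\to\Gamma$, acceptance condition $W\subseteq\Gamma^\omega$. A run on $w=a_1a_2\cdots$ is a sequence $(q_0,a_1,q_1)(q_1,a_2,q_2)\cdots$ of transitions with $q_0=q_{\mathrm{init}}$, accepting if its label sequence is in $W$; $\mathcal{L}(\mathcal{A})$ is the set of words with an accepting run. With a finite colour set $C$ and $\Gamma=2^C$, generalised coBüchi means $W=\{x : \text{some } c\in C \text{ occurs in only finitely many letters of } x\}$; a coBüchi automaton is the case $C=\{1\}$, its coBüchi transitions being those labelled $\{1\}$. A resolver is a map $\sigma:\Sigma^+\to\Delta$ such that for every $w=a_0a_1\cdots$, $\sigma(a_0)\sigma(a_0a_1)\cdots$ is a run on $w$, accepting whenever $w\in\mathcal{L}(\mathcal{A})$; history-deterministic means a resolver exists. The residual of $L$ with respect to $u\in\Sigma^*$ is $u^{-1}L=\{w\in\Sigma^\omega : uw\in L\}$. For a coBüchi automaton: $\mathcal{A}_{\mathrm{safe}}$ is obtained by deleting coBüchi transitions; a safe component is a strongly connected component of $\mathcal{A}_{\mathrm{safe}}$; the safe language of $q$ is the set of words with an infinite path from $q$ in $\mathcal{A}_{\mathrm{safe}}$; two states are equivalent if the automaton started from each recognises the same language. Semantically deterministic: $(q,a,p_1),(q,a,p_2)\in\Delta$ implies $p_1,p_2$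 equivalent; normal form: transitions between different safe components are coBüchi transitions; safe deterministic: $\mathcal{A}_{\mathrm{safe}}$ deterministic; nice: all states reachable, semantically deterministic, normal form, safe deterministic. Safe centralised: equivalent states with inclusion-comparable safe languages lie in the same safe component; safe minimal: equivalent states with equal safe languages are equal. *)

theory Defs
  imports Main "HOL-Library.Omega_Words_Fun"
begin

(* Alphabet: a finite type 'a (Sigma = UNIV).  Infinite words: 'a word = nat => 'a. *)

type_synonym ('q,'a) tr = "'q \<times> 'a \<times> 'q"

(* Generalised coBuechi automaton: output alphabet Gamma = Pow colours,
   acceptance: some colour occurs in only finitely many labels. *)
record ('q,'a) gcba =
  states  :: "'q set"
  init    :: 'q
  trans   :: "('q,'a) tr set"
  colours :: "nat set"
  col     :: "('q,'a) tr \<Rightarrow> nat set"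

definition wf_aut :: "('q,'a::finite) gcba \<Rightarrow> bool" where
  "wf_aut A \<longleftrightarrow> finite (states A) \<and> finite (colours A) \<and> init A \<in> states A
     \<and> trans A \<subseteq> states A \<times> UNIV \<times> states A
     \<and> (\<forall>e\<in>trans A. col A e \<subseteq> colours A)"

definition is_run :: "('q,'a) gcba \<Rightarrow> 'q \<Rightarrow> 'a word \<Rightarrow> (nat \<Rightarrow> ('q,'a) tr) \<Rightarrow> bool" where
  "is_run A q w r \<longleftrightarrow> fst (r 0) = q \<and>
     (\<forall>i. r i \<in> trans A \<and> fst (snd (r i)) = w i \<and> snd (snd (r i)) = fst (r (Suc i)))"

definition accepting :: "('q,'a) gcba \<Rightarrow> (nat \<Rightarrow> ('q,'a) tr) \<Rightarrow> bool" where
  "accepting A r \<longleftrightarrow> (\<exists>c\<in>colours A. finite {i. c \<in> col A (r i)})"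

definition lang :: "('q,'a) gcba \<Rightarrow> 'a word set" where
  "lang A = {w. \<exists>r. is_run A (init A) w r \<and> accepting A r}"

definition state_lang :: "('q,'a) gcba \<Rightarrow> 'q \<Rightarrow> 'a word set" where
  "state_lang A q = lang (A\<lparr>init := q\<rparr>)"

(* resolver: sigma : Sigma^+ -> Delta, applied to nonempty prefixes *)
definition is_resolver :: "('q,'a) gcba \<Rightarrow> ('a list \<Rightarrow> ('q,'a) tr) \<Rightarrow> bool" where
  "is_resolver A \<sigma> \<longleftrightarrow> (\<forall>w. is_run A (init A) w (\<lambda>i. \<sigma> (prefix (Suc i) w)) \<and>
       (w \<in> lang A \<longrightarrow> accepting A (\<lambda>i. \<sigma> (prefix (Suc i) w))))"

definition history_deterministic :: "('q,'a) gcba \<Rightarrow> bool" where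
  "history_deterministic A \<longleftrightarrow> (\<exists>\<sigma>. is_resolver A \<sigma>)"

definition is_cobuchi :: "('q,'a::finite) gcba \<Rightarrow> bool" where
  "is_cobuchi A \<longleftrightarrow> wf_aut A \<and> colours A = {1}"

definition deterministic :: "('q,'a) gcba \<Rightarrow> bool" where
  "deterministic A \<longleftrightarrow> (\<forall>q a p1 p2. (q,a,p1) \<in> trans A \<and> (q,a,p2) \<in> trans A \<longrightarrow> p1 = p2)"

definition cob_trans :: "('q,'a) gcba \<Rightarrow> ('q,'a) tr \<Rightarrow> bool" where
  "cob_trans A e \<longleftrightarrow> e \<in> trans A \<and> col A e = {1}"

definition safe_trans :: "('q,'a) gcba \<Rightarrow> ('q,'a) tr \<Rightarrow> bool" where
  "safe_trans A e \<longleftrightarrow> e \<in> trans A \<and> \<not> cob_trans A e"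

definition safe_step :: "('q,'a) gcba \<Rightarrow> 'q \<Rightarrow> 'q \<Rightarrow> bool" where
  "safe_step A p q \<longleftrightarrow> (\<exists>a. safe_trans A (p,a,q))"

definition step :: "('q,'a) gcba \<Rightarrow> 'q \<Rightarrow> 'q \<Rightarrow> bool" where
  "step A p q \<longleftrightarrow> (\<exists>a. (p,a,q) \<in> trans A)"

definition same_safe_comp :: "('q,'a) gcba \<Rightarrow> 'q \<Rightarrow> 'q \<Rightarrow> bool" where
  "same_safe_comp A p q \<longleftrightarrow> p \<in> states A \<and> q \<in> states A \<and>
     (safe_step A)\<^sup>*\<^sup>* p q \<and> (safe_step A)\<^sup>*\<^sup>* q p"

definition safe_components :: "('q,'a) gcba \<Rightarrow> 'q set set" where
  "safe_components A = {{q \<in> states A. same_safe_comp A p q} | p. p \<in> states A}"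

definition comp_trans :: "('q,'a) gcba \<Rightarrow> 'q set \<Rightarrow> ('q,'a) tr set" where
  "comp_trans A S = {e. safe_trans A e \<and> fst e \<in> S \<and> snd (snd e) \<in> S}"

definition safe_lang :: "('q,'a) gcba \<Rightarrow> 'q \<Rightarrow> 'a word set" where
  "safe_lang A q = {w. \<exists>r. is_run A q w r \<and> (\<forall>i. safe_trans A (r i))}"

definition equiv_states :: "('q,'a) gcba \<Rightarrow> 'q \<Rightarrow> 'q \<Rightarrow> bool" where
  "equiv_states A p q \<longleftrightarrow> state_lang A p = state_lang A q"

definition all_reachable :: "('q,'a) gcba \<Rightarrow> bool" where
  "all_reachable A \<longleftrightarrow> (\<forall>q\<in>states A. (step A)\<^sup>*\<^sup>* (init A) q)"

definition sem_det :: "('q,'a) gcba \<Rightarrow> bool" where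
  "sem_det A \<longleftrightarrow> (\<forall>q a p1 p2. (q,a,p1) \<in> trans A \<and> (q,a,p2) \<in> trans A \<longrightarrow> equiv_states A p1 p2)"

definition normal_form :: "('q,'a) gcba \<Rightarrow> bool" where
  "normal_form A \<longleftrightarrow> (\<forall>p a q. (p,a,q) \<in> trans A \<and> \<not> same_safe_comp A p q \<longrightarrow> cob_trans A (p,a,q))"

definition safe_det :: "('q,'a) gcba \<Rightarrow> bool" where
  "safe_det A \<longleftrightarrow> (\<forall>q a p1 p2. safe_trans A (q,a,p1) \<and> safe_trans A (q,a,p2) \<longrightarrow> p1 = p2)"

definition nice :: "('q,'a) gcba \<Rightarrow> bool" where
  "nice A \<longleftrightarrow> all_reachable A \<and> sem_det A \<and> normal_form A \<and> safe_det A"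

definition safe_centralised :: "('q,'a) gcba \<Rightarrow> bool" where
  "safe_centralised A \<longleftrightarrow> (\<forall>p\<in>states A. \<forall>q\<in>states A. equiv_states A p q \<and>
     (safe_lang A p \<subseteq> safe_lang A q \<or> safe_lang A q \<subseteq> safe_lang A p) \<longrightarrow> same_safe_comp A p q)"

definition safe_minimal :: "('q,'a) gcba \<Rightarrow> bool" where
  "safe_minimal A \<longleftrightarrow> (\<forall>p\<in>states A. \<forall>q\<in>states A. equiv_states A p q \<and>
     safe_lang A p = safe_lang A q \<longrightarrow> p = q)"

definition residuals :: "'a word set \<Rightarrow> 'a word set set" where
  "residuals L = {{w. u \<frown> w \<in> L} | u. True}"

end

theory Submission
  imports Defs
begin

(* Along any run of A_gen from p0, the current state lies in some P_j with R_j contained in the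
   residual of L by the prefix read so far, because a transition (q,a,q') of A_min satisfies
   a L(q') \<subseteq> L(q).  If colour i occurs only finitely often, the tail of the run consists of
   phi_i-images of transitions of the safe component S_i; injectivity of phi_i glues their
   preimages into a safe, hence accepting, run of A_min from a state with residual R_j, so the word
   is in L.  Conversely, A_gen mimics a resolver of A_min by sending each visited state q to
   phi_i(q) for the safe component S_i containing q: an accepting run of A_min is eventually safe,
   hence by the normal form eventually confined to one component, whose colour then stops. *)

section \<open>Runs and state languages\<close>

lemma state_lang_iff: "w \<in> state_lang A q \<longleftrightarrow> (\<exists>r. is_run A q w r \<and> accepting A r)"
  by (simp add: state_lang_def lang_def is_run_def accepting_def)

lemma accepting_iff_eventually:
  "accepting A r \<longleftrightarrow> (\<exists>c\<in>colours A. \<forall>\<^sub>F i in sequentially. c \<notin> col A (r i))"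
  by (simp add: accepting_def eventually_cofinite flip: cofinite_eq_sequentially)

lemma accepting_suffix: "accepting A (\<lambda>i. r (n + i)) \<longleftrightarrow> accepting A r"
proof -
  have "(\<forall>\<^sub>F i in sequentially. c \<notin> col A (r (i + n))) \<longleftrightarrow>
        (\<forall>\<^sub>F i in sequentially. c \<notin> col A (r i))" for c
    by (rule eventually_sequentially_seg)
  then show ?thesis by (simp add: accepting_iff_eventually add.commute[of n])
qed

lemma is_run_suffix: "is_run A q w r \<Longrightarrow> is_run A (fst (r n)) (suffix n w) (\<lambda>i. r (n + i))"
  by (simp add: is_run_def)

lemma is_run_build:
  assumes "(q, a, q') \<in> trans A" and "is_run A q' w r"
  shows "is_run A q (a ## w) (case_nat (q, a, q') r)"
  using assms by (auto simp: is_run_def split: nat.split)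

lemma suffix_build: "suffix (Suc 0) (a ## w) = w"
  by (simp add: fun_eq_iff)

lemma prefix_Suc: "prefix (Suc n) w = prefix n w @ [w n]"
  by (simp add: subsequence_def)

lemma butlast_prefix_Suc: "butlast (prefix (Suc n) w) = prefix n w"
  by (simp add: prefix_Suc)

lemma last_prefix_Suc: "last (prefix (Suc n) w) = w n"
  by (simp add: prefix_Suc)

lemma state_lang_trans:
  assumes "(q, a, q') \<in> trans A" and "w \<in> state_lang A q'"
  shows "a ## w \<in> state_lang A q"
proof -
  obtain r where "is_run A q' w r" and "accepting A r"
    using assms(2) by (auto simp: state_lang_iff)
  then have "is_run A q (a ## w) (case_nat (q, a, q') r) \<and> accepting A (case_nat (q, a, q') r)"
    using is_run_build[OF assms(1)] accepting_suffix[of A "case_nat (q, a, q') r" "Suc 0"] by simp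
  then show ?thesis by (auto simp: state_lang_iff)
qed

lemma state_lang_trans_eq:
  assumes "sem_det A" and "(q, a, q') \<in> trans A"
  shows "state_lang A q' = {w. a ## w \<in> state_lang A q}"
proof (intro equalityI subsetI CollectI)
  fix w
  assume "w \<in> state_lang A q'"
  then show "a ## w \<in> state_lang A q" by (rule state_lang_trans[OF assms(2)])
next
  fix w
  assume "w \<in> {w. a ## w \<in> state_lang A q}"
  then obtain r where run: "is_run A q (a ## w) r" and acc: "accepting A r"
    by (auto simp: state_lang_iff)
  then have "(q, a, fst (r 1)) \<in> trans A"
    by (auto simp: is_run_def) (metis prod.collapse build.simps(1))
  then have "equiv_states A (fst (r 1)) q'"
    using assms by (auto simp: sem_det_def)
  moreover have "w \<in> state_lang A (fst (r 1))"
    using is_run_suffix[OF run, of 1] acc accepting_suffix[of A r 1]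
    by (auto simp: state_lang_iff suffix_build)
  ultimately show "w \<in> state_lang A q'" by (simp add: equiv_states_def)
qed

lemma reachable_state_lang_in_residuals:
  assumes "sem_det A" and "(step A)\<^sup>*\<^sup>* (init A) q"
  shows "state_lang A q \<in> residuals (lang A)"
proof -
  from assms(2) have "\<exists>u. state_lang A q = {w. u \<frown> w \<in> lang A}"
  proof (induction rule: rtranclp_induct)
    case base
    have "state_lang A (init A) = {w. [] \<frown> w \<in> lang A}" by (simp add: state_lang_def)
    then show ?case ..
  next
    case (step p q)
    then obtain u a where "state_lang A p = {w. u \<frown> w \<in> lang A}" and "(p, a, q) \<in> trans A"
      by (auto simp: Defs.step_def)
    then have "state_lang A q = {w. (u @ [a]) \<frown> w \<in> lang A}"
      using state_lang_trans_eq[OF assms(1)] by simp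
    then show ?case ..
  qed
  then show ?thesis by (auto simp: residuals_def)
qed

lemma cobuchi_accepting_iff:
  assumes "is_cobuchi A" and "\<forall>i. r i \<in> trans A"
  shows "accepting A r \<longleftrightarrow> (\<forall>\<^sub>F i in sequentially. safe_trans A (r i))"
proof -
  have "1 \<notin> col A (r i) \<longleftrightarrow> safe_trans A (r i)" for i
    using assms by (fastforce simp: is_cobuchi_def wf_aut_def safe_trans_def cob_trans_def)
  then show ?thesis using assms(1) by (simp add: accepting_iff_eventually is_cobuchi_def)
qed

lemma safe_lang_subset_state_lang:
  assumes "is_cobuchi A"
  shows "safe_lang A q \<subseteq> state_lang A q"
proof
  fix w
  assume "w \<in> safe_lang A q"
  then obtain r where run: "is_run A q w r" and safe: "\<forall>i. safe_trans A (r i)"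
    by (auto simp: safe_lang_def)
  then have "accepting A r"
    using cobuchi_accepting_iff[OF assms] by (simp add: is_run_def)
  with run show "w \<in> state_lang A q" by (auto simp: state_lang_iff)
qed

section \<open>Safe components\<close>

lemma same_safe_comp_trans:
  "same_safe_comp A p q \<Longrightarrow> same_safe_comp A q r \<Longrightarrow> same_safe_comp A p r"
  unfolding same_safe_comp_def by (meson rtranclp_trans)

lemma safe_component_closed:
  assumes "C \<in> safe_components A" and "p \<in> C" and "same_safe_comp A p q"
  shows "q \<in> C"
  using assms by (auto simp: safe_components_def same_safe_comp_def intro: same_safe_comp_trans)

lemma safe_components_cover:
  assumes "q \<in> states A"
  shows "\<exists>C\<in>safe_components A. q \<in> C"
  using assms by (auto simp: safe_components_def same_safe_comp_def)

lemma safe_components_disjoint: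
  assumes "C \<in> safe_components A" and "C' \<in> safe_components A" and "q \<in> C" and "q \<in> C'"
  shows "C = C'"
  using assms by (auto simp: safe_components_def same_safe_comp_def intro: rtranclp_trans)

lemma safe_component_subset: "C \<in> safe_components A \<Longrightarrow> C \<subseteq> states A"
  by (auto simp: safe_components_def)

lemma safe_run_in_component:
  assumes "normal_form A" and "C \<in> safe_components A" and "q \<in> C"
    and run: "is_run A q w r" and safe: "\<forall>i. safe_trans A (r i)"
  shows "r i \<in> comp_trans A C"
proof -
  have "same_safe_comp A (fst (r i)) (snd (snd (r i)))" for i
  proof -
    obtain p a p' where e: "r i = (p, a, p')" by (cases "r i")
    then have "(p, a, p') \<in> trans A" and "\<not> cob_trans A (p, a, p')"
      using safe[THEN spec, of i] e by (simp_all add: safe_trans_def)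
    then have "same_safe_comp A p p'"
      using assms(1) unfolding normal_form_def by blast
    then show ?thesis using e by simp
  qed
  then have target: "fst (r i) \<in> C \<Longrightarrow> snd (snd (r i)) \<in> C" for i
    using safe_component_closed[OF assms(2)] by blast
  have source: "fst (r i) \<in> C"
  proof (induction i)
    case 0
    then show ?case using run \<open>q \<in> C\<close> by (simp add: is_run_def)
  next
    case (Suc i)
    then show ?case using target[OF Suc.IH] run by (simp add: is_run_def)
  qed
  show ?thesis using source target[OF source] safe by (simp add: comp_trans_def)
qed

section \<open>The construction\<close>

definition states_with_lang :: "('q,'a) gcba \<Rightarrow> 'a word set \<Rightarrow> 'q set" where
  "states_with_lang A X = {q \<in> states A. state_lang A q = X}"

definition map_trans :: "('q \<Rightarrow> 'p) \<Rightarrow> ('q,'a) tr \<Rightarrow> ('p,'a) tr" where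
  "map_trans f = (\<lambda>(q, a, q'). (f q, a, f q'))"

lemma map_trans_eq: "map_trans f e = (f (fst e), fst (snd e), f (snd (snd e)))"
  by (simp add: map_trans_def split_beta)

locale gen_construction =
  fixes Amin :: "('q,'a::finite) gcba"
    and k :: nat and S :: "nat \<Rightarrow> 'q set"
    and m :: nat and R :: "nat \<Rightarrow> 'a word set"
    and P :: "nat \<Rightarrow> 'p set" and p0 :: 'p
    and \<phi> :: "nat \<Rightarrow> 'q \<Rightarrow> 'p"
  assumes cobuchi: "is_cobuchi Amin"
    and nice: "nice Amin"
    and components: "bij_betw S {1..k} (safe_components Amin)"
    and R_residuals: "R ` {1..m} = residuals (lang Amin)"
    and R1: "R 1 = lang Amin"
    and P_disjoint: "\<forall>j\<in>{1..m}. \<forall>j'\<in>{1..m}. j \<noteq> j' \<longrightarrow> P j \<inter> P j' = {}"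
    and p0: "p0 \<in> P 1"
    and \<phi>_inj: "\<forall>i\<in>{1..k}. inj_on (\<phi> i) (S i)"
    and \<phi>_P: "\<forall>i\<in>{1..k}. \<forall>j\<in>{1..m}. \<forall>q\<in>S i \<inter> states_with_lang Amin (R j). \<phi> i q \<in> P j"
begin

abbreviation QR :: "nat \<Rightarrow> 'q set" where
  "QR j \<equiv> states_with_lang Amin (R j)"

definition A_gen :: "('p,'a) gcba" where
  "A_gen = \<lparr>states = (\<Union>j\<in>{1..m}. P j), init = p0,
     trans = {(p,a,p') | p a p'. \<exists>q q' j j'. (q,a,q') \<in> trans Amin \<and>
                j \<in> {1..m} \<and> j' \<in> {1..m} \<and> q \<in> QR j \<and> q' \<in> QR j' \<and>
                p \<in> P j \<and> p' \<in> P j'},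
     colours = {1..k},
     col = (\<lambda>e. {i \<in> {1..k}. \<not> (\<exists>(q,a,q') \<in> comp_trans Amin (S i).
                                 (\<phi> i q, a, \<phi> i q') = e)})\<rparr>"

lemma init_A_gen [simp]: "init A_gen = p0"
  and colours_A_gen [simp]: "colours A_gen = {1..k}"
  by (simp_all add: A_gen_def)

lemma trans_A_gen:
  "(p, a, p') \<in> trans A_gen \<longleftrightarrow> (\<exists>q q' j j'. (q, a, q') \<in> trans Amin \<and>
     j \<in> {1..m} \<and> j' \<in> {1..m} \<and> q \<in> QR j \<and> q' \<in> QR j' \<and> p \<in> P j \<and> p' \<in> P j')"
  by (simp add: A_gen_def)

lemma col_A_gen:
  "i \<in> col A_gen e \<longleftrightarrow> i \<in> {1..k} \<and> e \<notin> map_trans (\<phi> i) ` comp_trans Amin (S i)"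
  unfolding A_gen_def map_trans_def by (auto simp: image_iff split_beta)

lemma P_unique: "j \<in> {1..m} \<Longrightarrow> j' \<in> {1..m} \<Longrightarrow> p \<in> P j \<Longrightarrow> p \<in> P j' \<Longrightarrow> j = j'"
  using P_disjoint by blast

lemma trans_Amin_states: "(q, a, q') \<in> trans Amin \<Longrightarrow> q \<in> states Amin \<and> q' \<in> states Amin"
  using cobuchi by (auto simp: is_cobuchi_def wf_aut_def)

lemma init_in_QR1: "init Amin \<in> QR 1"
  using cobuchi R1 by (simp add: is_cobuchi_def wf_aut_def states_with_lang_def state_lang_def)

lemma one_in_indices: "1 \<in> {1..m}"
proof -
  have "lang Amin \<in> residuals (lang Amin)"
    unfolding residuals_def by (intro CollectI exI[of _ "[]"]) simp
  then obtain j where "j \<in> {1..m}"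
    using R_residuals by (metis imageE)
  then show ?thesis by simp
qed

lemma states_in_QR:
  assumes "q \<in> states Amin"
  shows "\<exists>j\<in>{1..m}. q \<in> QR j"
proof -
  have "state_lang Amin q \<in> residuals (lang Amin)"
    using nice assms unfolding nice_def all_reachable_def
    by (blast intro: reachable_state_lang_in_residuals)
  then show ?thesis using assms R_residuals by (auto simp: states_with_lang_def)
qed

lemma S_safe_component: "i \<in> {1..k} \<Longrightarrow> S i \<in> safe_components Amin"
  using components by (auto simp: bij_betw_def)

lemma S_subset_states: "i \<in> {1..k} \<Longrightarrow> S i \<subseteq> states Amin"
  using S_safe_component safe_component_subset by blast

lemma S_cover:
  assumes "q \<in> states Amin"
  shows "\<exists>i\<in>{1..k}. q \<in> S i"
proof -
  obtain C where "C \<in> safe_components Amin" and "q \<in> C"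
    using safe_components_cover[OF assms] by blast
  moreover have "safe_components Amin = S ` {1..k}"
    using components by (simp add: bij_betw_def)
  ultimately show ?thesis by auto
qed

lemma S_unique:
  assumes "i \<in> {1..k}" and "i' \<in> {1..k}" and "q \<in> S i" and "q \<in> S i'"
  shows "i = i'"
proof -
  have "S i = S i'"
    using safe_components_disjoint[OF S_safe_component S_safe_component] assms by blast
  moreover have "inj_on S {1..k}"
    using components by (simp add: bij_betw_def)
  ultimately show ?thesis
    using assms(1,2) by (simp add: inj_onD)
qed

definition comp_index :: "'q \<Rightarrow> nat" where
  "comp_index q = (THE i. i \<in> {1..k} \<and> q \<in> S i)"

lemma comp_index_eq:
  assumes "i \<in> {1..k}" and "q \<in> S i"
  shows "comp_index q = i"
  unfolding comp_index_def using assms S_unique by blast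

lemma comp_index: "q \<in> states Amin \<Longrightarrow> comp_index q \<in> {1..k} \<and> q \<in> S (comp_index q)"
  using S_cover comp_index_eq by metis

definition embed :: "'q \<Rightarrow> 'p" where
  "embed q = \<phi> (comp_index q) q"

lemma embed_in_P:
  assumes "j \<in> {1..m}" and "q \<in> QR j"
  shows "embed q \<in> P j"
proof -
  have "q \<in> states Amin" using assms(2) by (simp add: states_with_lang_def)
  then show ?thesis
    using comp_index \<phi>_P assms unfolding embed_def by blast
qed

text \<open>The simulation starts in p0, which need not be embed (init Amin).\<close>

definition sim_state :: "(nat \<Rightarrow> ('q,'a) tr) \<Rightarrow> nat \<Rightarrow> 'p" where
  "sim_state r = case_nat p0 (\<lambda>i. embed (snd (snd (r i))))"

definition sim_run :: "(nat \<Rightarrow> ('q,'a) tr) \<Rightarrow> nat \<Rightarrow> ('p,'a) tr" where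
  "sim_run r i = (sim_state r i, fst (snd (r i)), sim_state r (Suc i))"

lemma sim_state_in_P:
  assumes "is_run Amin (init Amin) w r"
  shows "\<exists>j\<in>{1..m}. fst (r i) \<in> QR j \<and> sim_state r i \<in> P j"
proof (cases i)
  case 0
  then show ?thesis
    using assms init_in_QR1 one_in_indices p0 by (auto simp: is_run_def sim_state_def)
next
  case (Suc i')
  have "r i' \<in> trans Amin" and target: "snd (snd (r i')) = fst (r i)"
    using assms Suc by (auto simp: is_run_def)
  then have "fst (r i) \<in> states Amin"
    using trans_Amin_states by (metis prod.collapse)
  then obtain j where "j \<in> {1..m}" and "fst (r i) \<in> QR j"
    using states_in_QR by blast
  then show ?thesis
    using embed_in_P Suc target by (auto simp: sim_state_def)
qed

lemma is_run_sim_run: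
  assumes run: "is_run Amin (init Amin) w r"
  shows "is_run A_gen p0 w (sim_run r)"
  unfolding is_run_def
proof (intro conjI allI)
  show "fst (sim_run r 0) = p0" by (simp add: sim_run_def sim_state_def)
next
  fix i
  obtain j j' where "j \<in> {1..m}" "fst (r i) \<in> QR j" "sim_state r i \<in> P j"
    and "j' \<in> {1..m}" "fst (r (Suc i)) \<in> QR j'" "sim_state r (Suc i) \<in> P j'"
    using sim_state_in_P[OF run] by meson
  moreover have "(fst (r i), w i, fst (r (Suc i))) \<in> trans Amin"
    using run by (simp add: is_run_def) (metis prod.collapse)
  moreover have "fst (snd (r i)) = w i"
    using run by (simp add: is_run_def)
  ultimately show "sim_run r i \<in> trans A_gen"
    unfolding sim_run_def trans_A_gen by auto
  show "fst (snd (sim_run r i)) = w i"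
    using run by (simp add: sim_run_def is_run_def)
  show "snd (snd (sim_run r i)) = fst (sim_run r (Suc i))"
    by (simp add: sim_run_def)
qed

lemma accepting_sim_run:
  assumes run: "is_run Amin (init Amin) w r" and acc: "accepting Amin r"
  shows "accepting A_gen (sim_run r)"
proof -
  have "\<forall>\<^sub>F i in sequentially. safe_trans Amin (r i)"
    using acc cobuchi_accepting_iff[OF cobuchi] run by (simp add: is_run_def)
  then obtain N where safe: "\<forall>i\<ge>N. safe_trans Amin (r i)"
    by (auto simp: eventually_sequentially)
  define c where "c = comp_index (fst (r N))"
  have "fst (r N) \<in> states Amin"
    using run trans_Amin_states unfolding is_run_def by (metis prod.collapse)
  then have c: "c \<in> {1..k}" "fst (r N) \<in> S c"
    using comp_index c_def by auto
  have "normal_form Amin" using nice by (simp add: nice_def)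
  then have in_comp: "r (N + i) \<in> comp_trans Amin (S c)" for i
    using safe_run_in_component[OF _ S_safe_component[OF c(1)] c(2) is_run_suffix[OF run]] safe
    by simp
  have "sim_run r i = map_trans (\<phi> c) (r i)" if "i > N" for i
  proof -
    obtain i' where i: "i = Suc i'" "i' \<ge> N" using \<open>i > N\<close> by (cases i) auto
    have "snd (snd (r i')) \<in> S c" and "snd (snd (r i)) \<in> S c"
      using in_comp[of "i' - N"] in_comp[of "i - N"] i by (simp_all add: comp_trans_def)
    then show ?thesis
      using comp_index_eq[OF c(1)] run i
      by (simp add: sim_run_def sim_state_def embed_def map_trans_eq is_run_def)
  qed
  then have "c \<notin> col A_gen (sim_run r i)" if "i \<ge> Suc N" for i
    using in_comp[of "i - N"] that by (simp add: col_A_gen)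
  then have "\<forall>\<^sub>F i in sequentially. c \<notin> col A_gen (sim_run r i)"
    by (auto simp: eventually_sequentially)
  then show ?thesis
    using c(1) by (auto simp: accepting_iff_eventually)
qed

lemma trans_A_gen_residual:
  assumes "(p, a, p') \<in> trans A_gen" and "j \<in> {1..m}" and "p \<in> P j"
  shows "\<exists>j'\<in>{1..m}. p' \<in> P j' \<and> R j' \<subseteq> {v. a ## v \<in> R j}"
proof -
  obtain q q' j0 j' where "(q, a, q') \<in> trans Amin" "j0 \<in> {1..m}" "j' \<in> {1..m}"
    and "q \<in> QR j0" "q' \<in> QR j'" "p \<in> P j0" "p' \<in> P j'"
    using assms(1) trans_A_gen by blast
  moreover have "j0 = j" using P_unique assms calculation by blast
  ultimately show ?thesis
    using state_lang_trans by (fastforce simp: states_with_lang_def)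
qed

lemma run_A_gen_residual:
  assumes run: "is_run A_gen p0 w r"
  shows "\<exists>j\<in>{1..m}. fst (r n) \<in> P j \<and> R j \<subseteq> {v. prefix n w \<frown> v \<in> lang Amin}"
proof (induction n)
  case 0
  show ?case using one_in_indices run p0 R1 by (auto simp: is_run_def subsequence_def)
next
  case (Suc n)
  then obtain j where j: "j \<in> {1..m}" "fst (r n) \<in> P j" "R j \<subseteq> {v. prefix n w \<frown> v \<in> lang Amin}"
    by blast
  have "(fst (r n), w n, fst (r (Suc n))) \<in> trans A_gen"
    using run by (simp add: is_run_def) (metis prod.collapse)
  then obtain j' where "j' \<in> {1..m}" "fst (r (Suc n)) \<in> P j'" "R j' \<subseteq> {v. w n ## v \<in> R j}"
    using trans_A_gen_residual j by blast
  moreover have "{v. w n ## v \<in> R j} \<subseteq> {v. prefix (Suc n) w \<frown> v \<in> lang Amin}"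
    using j(3) by (auto simp: prefix_Suc)
  ultimately show ?case by blast
qed

lemma lift_colour_avoiding_run:
  assumes c: "c \<in> {1..k}" and run: "is_run A_gen p w r" and avoid: "\<forall>i. c \<notin> col A_gen (r i)"
  shows "\<exists>q\<in>S c. \<phi> c q = p \<and> w \<in> safe_lang Amin q"
proof -
  obtain g where g: "\<forall>i. g i \<in> comp_trans Amin (S c) \<and> map_trans (\<phi> c) (g i) = r i"
    using avoid c by (simp add: col_A_gen image_iff) metis
  then have in_S: "fst (g i) \<in> S c" "snd (snd (g i)) \<in> S c" and safe: "safe_trans Amin (g i)" for i
    by (auto simp: comp_trans_def)
  have "\<phi> c (snd (snd (g i))) = \<phi> c (fst (g (Suc i)))" for i
    using g run by (simp add: is_run_def map_trans_eq prod_eq_iff)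
  then have link: "snd (snd (g i)) = fst (g (Suc i))" for i
    using \<phi>_inj c in_S by (meson inj_onD)
  have "is_run Amin (fst (g 0)) w g"
    using g run safe link by (simp add: is_run_def map_trans_eq prod_eq_iff safe_trans_def)
  moreover have "\<phi> c (fst (g 0)) = p"
    using g run by (simp add: is_run_def map_trans_eq prod_eq_iff)
  ultimately show ?thesis
    using in_S safe by (auto simp: safe_lang_def)
qed

lemma lang_A_gen_subset: "lang A_gen \<subseteq> lang Amin"
proof
  fix w
  assume "w \<in> lang A_gen"
  then obtain r where run: "is_run A_gen p0 w r" and acc: "accepting A_gen r"
    by (auto simp: lang_def)
  then obtain c N where c: "c \<in> {1..k}" and N: "\<forall>i\<ge>N. c \<notin> col A_gen (r i)"
    by (auto simp: accepting_iff_eventually eventually_sequentially)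
  have "\<forall>i. c \<notin> col A_gen (r (N + i))"
    using N by simp
  then obtain q where q: "q \<in> S c" "\<phi> c q = fst (r N)" and "suffix N w \<in> safe_lang Amin q"
    using lift_colour_avoiding_run[OF c is_run_suffix[OF run]] by blast
  then have suffix: "suffix N w \<in> state_lang Amin q"
    using safe_lang_subset_state_lang[OF cobuchi] by blast
  obtain j where j: "j \<in> {1..m}" "q \<in> QR j"
    using states_in_QR S_subset_states c q(1) by blast
  then have "\<phi> c q \<in> P j"
    using \<phi>_P c q(1) by blast
  then have rN: "fst (r N) \<in> P j"
    using q(2) by simp
  obtain j' where j': "j' \<in> {1..m}" "fst (r N) \<in> P j'"
    and residual: "R j' \<subseteq> {v. prefix N w \<frown> v \<in> lang Amin}"
    using run_A_gen_residual[OF run] by blast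
  have "j' = j"
    using P_unique[OF j'(1) j(1) j'(2) rN] .
  then have "suffix N w \<in> R j'"
    using suffix j(2) by (simp add: states_with_lang_def)
  then have "prefix N w \<frown> suffix N w \<in> lang Amin"
    using residual by blast
  then show "w \<in> lang Amin"
    by (subst prefix_suffix[of w N])
qed

lemma lang_A_gen: "lang A_gen = lang Amin"
proof
  show "lang Amin \<subseteq> lang A_gen"
    unfolding lang_def init_A_gen using is_run_sim_run accepting_sim_run by blast
qed (rule lang_A_gen_subset)

lemma history_deterministic_A_gen:
  assumes "history_deterministic Amin"
  shows "history_deterministic A_gen"
proof -
  obtain \<sigma> where \<sigma>: "is_resolver Amin \<sigma>"
    using assms by (auto simp: history_deterministic_def)
  define pos where "pos u = (if u = [] then p0 else embed (snd (snd (\<sigma> u))))" for u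
  define \<tau> where "\<tau> v = (pos (butlast v), last v, pos v)" for v
  have \<tau>: "(\<lambda>i. \<tau> (prefix (Suc i) w)) = sim_run (\<lambda>i. \<sigma> (prefix (Suc i) w))" for w
  proof
    fix i
    have label: "fst (snd (\<sigma> (prefix (Suc i) w))) = w i"
      using \<sigma> by (simp add: is_resolver_def is_run_def)
    have pos: "pos (prefix n w) = sim_state (\<lambda>i. \<sigma> (prefix (Suc i) w)) n" for n
      by (cases n) (simp_all add: pos_def sim_state_def subsequence_def)
    show "\<tau> (prefix (Suc i) w) = sim_run (\<lambda>i. \<sigma> (prefix (Suc i) w)) i"
      unfolding \<tau>_def sim_run_def butlast_prefix_Suc last_prefix_Suc pos label ..
  qed
  have "is_resolver A_gen \<tau>"
    unfolding is_resolver_def \<tau> init_A_gen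
  proof (intro allI conjI impI)
    fix w
    have run: "is_run Amin (init Amin) w (\<lambda>i. \<sigma> (prefix (Suc i) w))"
      using \<sigma> by (simp add: is_resolver_def)
    then show "is_run A_gen p0 w (sim_run (\<lambda>i. \<sigma> (prefix (Suc i) w)))"
      by (rule is_run_sim_run)
    assume "w \<in> lang A_gen"
    then have "accepting Amin (\<lambda>i. \<sigma> (prefix (Suc i) w))"
      using \<sigma> lang_A_gen by (simp add: is_resolver_def)
    with run show "accepting A_gen (sim_run (\<lambda>i. \<sigma> (prefix (Suc i) w)))"
      by (rule accepting_sim_run)
  qed
  then show ?thesis by (auto simp: history_deterministic_def)
qed

end

theorem proposition23:
  fixes L :: "('a::finite) word set"
    and Amin :: "('q,'a) gcba"
    and k :: nat and S :: "nat \<Rightarrow> 'q set"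
    and m :: nat and R :: "nat \<Rightarrow> 'a word set"
    and P :: "nat \<Rightarrow> 'p set" and p0 :: 'p
    and \<phi> :: "nat \<Rightarrow> 'q \<Rightarrow> 'p"
  defines "QR \<equiv> \<lambda>j. {q \<in> states Amin. state_lang Amin q = R j}"
    and "Q \<equiv> (\<Union>j\<in>{1..m}. P j)"
  assumes dcw: "\<exists>D :: (nat,'a) gcba. is_cobuchi D \<and> deterministic D \<and> lang D = L"
    and cob: "is_cobuchi Amin"
    and nice: "nice Amin"
    and smin: "safe_minimal Amin"
    and scent: "safe_centralised Amin"
    and hd: "history_deterministic Amin"
    and lang: "lang Amin = L"
    and comps: "bij_betw S {1..k} (safe_components Amin)"
    and res: "bij_betw R {1..m} (residuals L)"
    and R1: "R 1 = L"
    and Pfin: "\<forall>j\<in>{1..m}. finite (P j)"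
    and Pcard: "\<forall>j\<in>{1..m}. card (P j) = Max ((\<lambda>i. card (S i \<inter> QR j)) ` {1..k})"
    and Pdisj: "\<forall>j\<in>{1..m}. \<forall>j'\<in>{1..m}. j \<noteq> j' \<longrightarrow> P j \<inter> P j' = {}"
    and p0: "p0 \<in> P 1"
    and \<phi>inj: "\<forall>i\<in>{1..k}. inj_on (\<phi> i) (S i)"
    and \<phi>P: "\<forall>i\<in>{1..k}. \<forall>j\<in>{1..m}. \<forall>q\<in>S i \<inter> QR j. \<phi> i q \<in> P j"
  shows "history_deterministic
            \<lparr>states = Q, init = p0,
             trans = {(p,a,p') | p a p'. \<exists>q q' j j'. (q,a,q') \<in> trans Amin \<and>
                        j \<in> {1..m} \<and> j' \<in> {1..m} \<and> q \<in> QR j \<and> q' \<in> QR j' \<and>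
                        p \<in> P j \<and> p' \<in> P j'},
             colours = {1..k},
             col = (\<lambda>e. {i \<in> {1..k}. \<not> (\<exists>(q,a,q') \<in> comp_trans Amin (S i).
                                         (\<phi> i q, a, \<phi> i q') = e)})\<rparr>
       \<and> lang
            \<lparr>states = Q, init = p0,
             trans = {(p,a,p') | p a p'. \<exists>q q' j j'. (q,a,q') \<in> trans Amin \<and>
                        j \<in> {1..m} \<and> j' \<in> {1..m} \<and> q \<in> QR j \<and> q' \<in> QR j' \<and>
                        p \<in> P j \<and> p' \<in> P j'},
             colours = {1..k},
             col = (\<lambda>e. {i \<in> {1..k}. \<not> (\<exists>(q,a,q') \<in> comp_trans Amin (S i).
                                         (\<phi> i q, a, \<phi> i q') = e)})\<rparr> = L"
proof -
  interpret gen_construction Amin k S m R P p0 \<phi>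
  proof
    show "R ` {1..m} = residuals (lang Amin)"
      using res lang by (simp add: bij_betw_def)
    show "R 1 = lang Amin"
      using R1 lang by simp
    show "\<forall>i\<in>{1..k}. \<forall>j\<in>{1..m}. \<forall>q\<in>S i \<inter> states_with_lang Amin (R j). \<phi> i q \<in> P j"
      using \<phi>P by (simp add: QR_def states_with_lang_def)
  qed (fact cob nice comps Pdisj p0 \<phi>inj)+
  show ?thesis
    using history_deterministic_A_gen[OF hd] lang_A_gen lang
    unfolding A_gen_def QR_def Q_def states_with_lang_def by simp
qed

end
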